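(* $f_3(6,5)=4=\rho_3(T(8,4))$, where $T(8,4)$ is the complete $4$-partite graph with all parts of size $2$.
   Context: $\mathcal{G}(\Delta,\omega)$ denotes the class of finite simple graphs $G$ with maximum degree $\Delta(G)\le\Delta$ and clique number $\omega(G)\le\omega$. $k_t(G)$ is the number of copies of $K_t$ in $G$ and $\rho_t(G)=k_t(G)/|V(G)|$. $f_t(\Delta,\omega)=\sup\{\rho_t(G): G\in\mathcal{G}(\Delta,\omega),\ |V(G)|\ge 1\}$. *)

theory Defs
  imports Main "HOL-Library.Disjoint_Sets" Complex_Main
begin

text \<open>A finite simple graph on vertices drawn from nat: vertex set V, edge set E
  consisting of 2-element subsets of V. Every finite simple graph is isomorphic to one of these.\<close>
definition simple_graph :: "nat set \<Rightarrow> nat set set \<Rightarrow> bool" where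
  "simple_graph V E \<longleftrightarrow> finite V \<and> (\<forall>e\<in>E. e \<subseteq> V \<and> card e = 2)"

definition degree :: "nat set set \<Rightarrow> nat \<Rightarrow> nat" where
  "degree E v = card {e \<in> E. v \<in> e}"

definition is_clique :: "nat set \<Rightarrow> nat set set \<Rightarrow> nat set \<Rightarrow> bool" where
  "is_clique V E S \<longleftrightarrow> S \<subseteq> V \<and> (\<forall>x\<in>S. \<forall>y\<in>S. x \<noteq> y \<longrightarrow> {x, y} \<in> E)"

definition k_cliques :: "nat \<Rightarrow> nat set \<Rightarrow> nat set set \<Rightarrow> nat" where
  "k_cliques t V E = card {S. is_clique V E S \<and> card S = t}"

definition rho :: "nat \<Rightarrow> nat set \<Rightarrow> nat set set \<Rightarrow> real" where
  "rho t V E = real (k_cliques t V E) / real (card V)"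

definition in_class :: "nat \<Rightarrow> nat \<Rightarrow> nat set \<Rightarrow> nat set set \<Rightarrow> bool" where
  "in_class \<Delta> \<omega> V E \<longleftrightarrow> simple_graph V E \<and> (\<forall>v\<in>V. degree E v \<le> \<Delta>)
     \<and> (\<forall>S. is_clique V E S \<longrightarrow> card S \<le> \<omega>)"

definition f_sup :: "nat \<Rightarrow> nat \<Rightarrow> nat \<Rightarrow> real" where
  "f_sup t \<Delta> \<omega> = Sup {rho t V E | V E. in_class \<Delta> \<omega> V E \<and> card V \<ge> 1}"

text \<open>Complete 4-partite graph T(8,4): vertices 0..7, parts {0,1},{2,3},{4,5},{6,7}.\<close>
definition T84_V :: "nat set" where "T84_V = {0..<8}"
definition T84_E :: "nat set set" where
  "T84_E = {{x, y} | x y. x \<in> T84_V \<and> y \<in> T84_V \<and> x div 2 \<noteq> y div 2}"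

end

theory Submission
  imports Defs
begin

text \<open>Let t(v) be the number of triangles through v, i.e. the number of edges inside the
  neighbourhood N(v), so that the t(v) sum to 3 k_3.  With maximum degree 6 and no K_6, N(v) spans
  no K_5, so the non-edges inside N(v) cannot all pass through one vertex; hence t(v) \<le> 13.
  A vertex h with t(h) = 13 has N(h) = K_6 minus two disjoint edges aa', bb'; its other two
  neighbours c, d then also have t = 13, while a, a', b, b' have t \<le> 11.  So every heavy vertex
  (t = 13) has at least four light neighbours (t \<le> 11), and a light neighbour of a heavy vertex
  has two light neighbours of its own, hence at most four heavy ones.  Double counting gives
  #heavy \<le> #light, so t averages at most 12 and k_3 \<le> 4 |V|; T(8,4) attains this.\<close>

definition neighbours :: "nat set set \<Rightarrow> nat \<Rightarrow> nat set" where
  "neighbours E v = {u. {v, u} \<in> E}"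

definition pairs :: "nat set \<Rightarrow> nat set set" where
  "pairs B = {e. e \<subseteq> B \<and> card e = 2}"

definition missing_edges :: "nat set set \<Rightarrow> nat set \<Rightarrow> nat set set" where
  "missing_edges E B = {e \<in> pairs B. e \<notin> E}"

definition triangles_at :: "nat set set \<Rightarrow> nat \<Rightarrow> nat" where
  "triangles_at E v = card {e \<in> pairs (neighbours E v). e \<in> E}"

lemma simple_graph_edge:
  assumes "simple_graph V E" "{x, y} \<in> E"
  shows "x \<noteq> y" "x \<in> V" "y \<in> V"
proof -
  have "{x, y} \<subseteq> V" "card {x, y} = 2" using assms unfolding simple_graph_def by auto
  then show "x \<noteq> y" "x \<in> V" "y \<in> V" by (cases "x = y"; auto)+
qed

lemma neighbours_sym: "u \<in> neighbours E v \<longleftrightarrow> v \<in> neighbours E u"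
  unfolding neighbours_def by (simp add: insert_commute)

lemma
  assumes "simple_graph V E"
  shows neighbours_subset: "neighbours E v \<subseteq> V"
    and not_in_neighbours: "v \<notin> neighbours E v"
    and finite_neighbours: "finite (neighbours E v)"
proof -
  show sub: "neighbours E v \<subseteq> V"
    using simple_graph_edge[OF assms] unfolding neighbours_def by blast
  show "finite (neighbours E v)"
    using assms finite_subset[OF sub] unfolding simple_graph_def by blast
  show "v \<notin> neighbours E v"
    using simple_graph_edge[OF assms] unfolding neighbours_def by blast
qed

lemma neighbours_outside:
  assumes "simple_graph V E" "v \<notin> V"
  shows "neighbours E v = {}"
  using simple_graph_edge(2)[OF assms(1)] assms(2) unfolding neighbours_def by blast

lemma edge_minus_vertex:
  assumes "card e = 2" "v \<in> e"
  obtains u where "u \<noteq> v" "e = {v, u}" "e - {v} = {u}"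
proof -
  obtain x y where xy: "e = {x, y}" "x \<noteq> y" using assms(1) by (auto simp: card_2_iff)
  show ?thesis
  proof (cases "v = x")
    case True
    then show ?thesis using that[of y] xy by auto
  next
    case False
    then show ?thesis using that[of x] xy assms(2) by auto
  qed
qed

lemma degree_eq_card_neighbours:
  assumes "simple_graph V E"
  shows "degree E v = card (neighbours E v)"
proof -
  have "bij_betw (\<lambda>e. the_elem (e - {v})) {e \<in> E. v \<in> e} (neighbours E v)"
  proof (rule bij_betw_byWitness[where f' = "\<lambda>u. {v, u}"])
    show "\<forall>e\<in>{e \<in> E. v \<in> e}. {v, the_elem (e - {v})} = e"
    proof
      fix e assume "e \<in> {e \<in> E. v \<in> e}"
      then have "card e = 2" "v \<in> e" using assms unfolding simple_graph_def by auto
      then show "{v, the_elem (e - {v})} = e" by (metis edge_minus_vertex the_elem_eq)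
    qed
    show "\<forall>u\<in>neighbours E v. the_elem ({v, u} - {v}) = u"
    proof
      fix u assume "u \<in> neighbours E v"
      then have "{v, u} - {v} = {u}" using not_in_neighbours[OF assms, of v] by auto
      then show "the_elem ({v, u} - {v}) = u" by simp
    qed
    show "(\<lambda>u. {v, u}) ` neighbours E v \<subseteq> {e \<in> E. v \<in> e}"
      unfolding neighbours_def by auto
    show "(\<lambda>e. the_elem (e - {v})) ` {e \<in> E. v \<in> e} \<subseteq> neighbours E v"
    proof clarify
      fix e assume "e \<in> E" "v \<in> e"
      then have "card e = 2" using assms unfolding simple_graph_def by auto
      then obtain u where "e = {v, u}" "e - {v} = {u}" using \<open>v \<in> e\<close> by (rule edge_minus_vertex)
      then show "the_elem (e - {v}) \<in> neighbours E v"
        using \<open>e \<in> E\<close> unfolding neighbours_def by simp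
    qed
  qed
  then show ?thesis unfolding degree_def by (rule bij_betw_same_card)
qed

lemma pair_in_pairs: "x \<in> B \<Longrightarrow> y \<in> B \<Longrightarrow> x \<noteq> y \<Longrightarrow> {x, y} \<in> pairs B"
  unfolding pairs_def by auto

lemma pairsE:
  assumes "e \<in> pairs B"
  obtains x y where "e = {x, y}" "x \<noteq> y" "x \<in> B" "y \<in> B"
proof -
  have "e \<subseteq> B" "card e = 2" using assms unfolding pairs_def by auto
  then show ?thesis using that by (auto simp: card_2_iff)
qed

lemma finite_pairs: "finite B \<Longrightarrow> finite (pairs B)"
  unfolding pairs_def by (auto intro: finite_subset[of _ "Pow B"])

lemma finite_missing_edges: "finite B \<Longrightarrow> finite (missing_edges E B)"
  unfolding missing_edges_def by (simp add: finite_pairs)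

lemma triangles_at_plus_missing_edges:
  assumes "simple_graph V E"
  shows "triangles_at E v + card (missing_edges E (neighbours E v))
           = card (neighbours E v) choose 2"
proof -
  let ?P = "pairs (neighbours E v)"
  have fin: "finite ?P" using finite_pairs[OF finite_neighbours[OF assms]] .
  have "card {e \<in> ?P. e \<in> E} + card {e \<in> ?P. e \<notin> E}
          = card ({e \<in> ?P. e \<in> E} \<union> {e \<in> ?P. e \<notin> E})"
    by (rule card_Un_disjoint[symmetric]) (use fin in auto)
  also have "{e \<in> ?P. e \<in> E} \<union> {e \<in> ?P. e \<notin> E} = ?P" by blast
  also have "card ?P = card (neighbours E v) choose 2"
    unfolding pairs_def by (rule n_subsets[OF finite_neighbours[OF assms]])
  finally show ?thesis unfolding triangles_at_def missing_edges_def .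
qed

subsection \<open>Counting triangles vertex by vertex\<close>

lemma card_filter_eq_sum: "finite A \<Longrightarrow> card {x \<in> A. P x} = (\<Sum>x\<in>A. if P x then 1 else 0)"
  by (simp add: sum.inter_filter[symmetric])

lemma double_counting:
  "finite A \<Longrightarrow> finite B \<Longrightarrow>
    (\<Sum>a\<in>A. card {b \<in> B. R a b}) = (\<Sum>b\<in>B. card {a \<in> A. R a b})"
  by (simp add: card_filter_eq_sum sum.swap[of _ A B])

lemma triangles_at_eq_card_triangles:
  assumes "simple_graph V E" "v \<in> V"
  shows "triangles_at E v = card {S. is_clique V E S \<and> card S = 3 \<and> v \<in> S}"
proof -
  have "bij_betw (insert v) {e \<in> pairs (neighbours E v). e \<in> E}
          {S. is_clique V E S \<and> card S = 3 \<and> v \<in> S}"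
  proof (rule bij_betw_byWitness[where f' = "\<lambda>S. S - {v}"])
    show "\<forall>e\<in>{e \<in> pairs (neighbours E v). e \<in> E}. insert v e - {v} = e"
      using not_in_neighbours[OF assms(1)] unfolding pairs_def by auto
    show "\<forall>S\<in>{S. is_clique V E S \<and> card S = 3 \<and> v \<in> S}. insert v (S - {v}) = S" by auto
    show "insert v ` {e \<in> pairs (neighbours E v). e \<in> E}
            \<subseteq> {S. is_clique V E S \<and> card S = 3 \<and> v \<in> S}"
    proof clarify
      fix e assume e: "e \<in> pairs (neighbours E v)" "e \<in> E"
      obtain x y where xy: "e = {x, y}" "x \<noteq> y" "x \<in> neighbours E v" "y \<in> neighbours E v"
        using e(1) by (rule pairsE)
      have "v \<noteq> x" "v \<noteq> y" using xy not_in_neighbours[OF assms(1)] by auto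
      moreover have "x \<in> V" "y \<in> V" using xy neighbours_subset[OF assms(1)] by auto
      ultimately show "is_clique V E (insert v e) \<and> card (insert v e) = 3 \<and> v \<in> insert v e"
        using xy e assms(2) unfolding is_clique_def neighbours_def by (auto simp: insert_commute)
    qed
    show "(\<lambda>S. S - {v}) ` {S. is_clique V E S \<and> card S = 3 \<and> v \<in> S}
            \<subseteq> {e \<in> pairs (neighbours E v). e \<in> E}"
    proof clarify
      fix S assume S: "is_clique V E S" "card S = 3" "v \<in> S"
      then have "card (S - {v}) = 2" by simp
      then obtain p q where pq: "S - {v} = {p, q}" "p \<noteq> q" by (meson card_2_iff)
      then have "p \<in> S" "q \<in> S" "p \<noteq> v" "q \<noteq> v" by auto
      then have "{v, p} \<in> E" "{v, q} \<in> E" "{p, q} \<in> E"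
        using S pq(2) unfolding is_clique_def by auto
      then show "S - {v} \<in> pairs (neighbours E v) \<and> S - {v} \<in> E"
        using pq unfolding pairs_def neighbours_def by auto
    qed
  qed
  then show ?thesis unfolding triangles_at_def by (rule bij_betw_same_card)
qed

lemma sum_triangles_at:
  assumes "simple_graph V E"
  shows "(\<Sum>v\<in>V. triangles_at E v) = 3 * k_cliques 3 V E"
proof -
  let ?T = "{S. is_clique V E S \<and> card S = 3}"
  have finV: "finite V" using assms unfolding simple_graph_def by simp
  have finT: "finite ?T"
    by (rule finite_subset[of _ "Pow V"]) (auto simp: is_clique_def finV)
  have "(\<Sum>v\<in>V. triangles_at E v) = (\<Sum>v\<in>V. card {S \<in> ?T. v \<in> S})"
    using triangles_at_eq_card_triangles[OF assms] by (intro sum.cong) simp_all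
  also have "\<dots> = (\<Sum>S\<in>?T. card {v \<in> V. v \<in> S})" by (rule double_counting[OF finV finT])
  also have "\<dots> = (\<Sum>S\<in>?T. 3)"
  proof (rule sum.cong)
    fix S assume "S \<in> ?T"
    then have "{v \<in> V. v \<in> S} = S" "card S = 3" unfolding is_clique_def by auto
    then show "card {v \<in> V. v \<in> S} = 3" by simp
  qed simp
  finally show ?thesis unfolding k_cliques_def by simp
qed

lemma is_clique_insert_neighbours:
  assumes "simple_graph V E" "v \<in> V" "Z \<subseteq> neighbours E v"
    and "\<forall>x\<in>Z. \<forall>y\<in>Z. x \<noteq> y \<longrightarrow> {x, y} \<in> E"
  shows "is_clique V E (insert v Z)"
proof -
  have "Z \<subseteq> V" using assms(3) neighbours_subset[OF assms(1)] by blast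
  moreover have "{v, z} \<in> E" "{z, v} \<in> E" if "z \<in> Z" for z
    using that assms(3) unfolding neighbours_def by (auto simp: insert_commute)
  ultimately show ?thesis using assms(2,4) unfolding is_clique_def by blast
qed

subsection \<open>Graphs of maximum degree 6 without K_6\<close>

locale class_6_5 =
  fixes V :: "nat set" and E :: "nat set set"
  assumes in_class: "in_class 6 5 V E"
begin

lemma simple: "simple_graph V E"
  using in_class unfolding in_class_def by simp

lemma clique_le_5: "is_clique V E S \<Longrightarrow> card S \<le> 5"
  using in_class unfolding in_class_def by simp

lemma card_neighbours_le_6: "card (neighbours E v) \<le> 6"
  using in_class degree_eq_card_neighbours[OF simple] neighbours_outside[OF simple]
  unfolding in_class_def by (cases "v \<in> V") auto

lemma missing_edges_not_covered:
  assumes "\<forall>e \<in> missing_edges E (neighbours E v). z \<in> e"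
  shows "card (neighbours E v) \<le> 5"
proof (cases "neighbours E v = {}")
  case False
  then have "v \<in> V"
    using simple_graph_edge(2)[OF simple] unfolding neighbours_def by blast
  let ?Z = "neighbours E v - {z}"
  have "\<forall>x\<in>?Z. \<forall>y\<in>?Z. x \<noteq> y \<longrightarrow> {x, y} \<in> E"
    using assms pair_in_pairs unfolding missing_edges_def by fastforce
  then have "card (insert v ?Z) \<le> 5"
    by (intro clique_le_5 is_clique_insert_neighbours[OF simple \<open>v \<in> V\<close>]) auto
  moreover have "v \<notin> ?Z" "finite ?Z" using not_in_neighbours[OF simple] finite_neighbours[OF simple]
    by auto
  ultimately have "card ?Z \<le> 4" by simp
  then show ?thesis
    using finite_neighbours[OF simple, of v] by (cases "z \<in> neighbours E v") (auto simp: card_Diff_singleton)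
qed simp

lemma triangles_at_le_10:
  assumes "card (neighbours E v) \<le> 5"
  shows "triangles_at E v \<le> 10"
proof -
  have "card (neighbours E v) choose 2 \<le> 5 choose 2" by (rule binomial_right_mono[OF assms])
  then show ?thesis using triangles_at_plus_missing_edges[OF simple, of v] by (simp add: choose_two)
qed

lemma triangles_at_deg_6:
  assumes "card (neighbours E v) = 6"
  shows "triangles_at E v + card (missing_edges E (neighbours E v)) = 15"
  using triangles_at_plus_missing_edges[OF simple, of v] assms by (simp add: choose_two)

lemma two_missing_edges:
  assumes "card (neighbours E v) = 6"
  shows "2 \<le> card (missing_edges E (neighbours E v))"
proof (rule ccontr)
  let ?M = "missing_edges E (neighbours E v)"
  assume "\<not> 2 \<le> card ?M"
  then have "card ?M \<le> 1" by simp
  have "\<exists>z. \<forall>e\<in>?M. z \<in> e"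
  proof (cases "?M = {}")
    case False
    then obtain e where e: "e \<in> ?M" by blast
    then obtain x y where "e = {x, y}" unfolding missing_edges_def by (blast elim: pairsE)
    moreover have "finite ?M" by (rule finite_missing_edges[OF finite_neighbours[OF simple]])
    then have "?M = {e}" using e \<open>card ?M \<le> 1\<close> by (auto simp: card_le_Suc0_iff_eq)
    ultimately show ?thesis by blast
  qed simp
  then show False using missing_edges_not_covered assms by force
qed

lemma triangles_at_le_13: "triangles_at E v \<le> 13"
proof (cases "card (neighbours E v) = 6")
  case True
  then show ?thesis using triangles_at_deg_6 two_missing_edges by fastforce
next
  case False
  then have "card (neighbours E v) \<le> 5" using card_neighbours_le_6[of v] by simp
  then show ?thesis using triangles_at_le_10 by fastforce
qed

end

subsection \<open>Neighbourhoods of heavy vertices\<close>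

text \<open>The neighbourhood of a vertex h lying in 13 triangles: six vertices spanning all pairs
  except aa' and bb'.  We call c, d the centres and a, a', b, b' the peripheral vertices.\<close>

definition heavy_config ::
  "nat set set \<Rightarrow> nat \<Rightarrow> nat \<Rightarrow> nat \<Rightarrow> nat \<Rightarrow> nat \<Rightarrow> nat \<Rightarrow> nat \<Rightarrow> bool" where
  "heavy_config E h c d a a' b b' \<longleftrightarrow> card {c, d, a, a', b, b'} = 6 \<and>
     neighbours E h = {c, d, a, a', b, b'} \<and> missing_edges E {c, d, a, a', b, b'} = {{a, a'}, {b, b'}}"

lemma heavy_config_swap_centres:
  assumes "heavy_config E h c d a a' b b'"
  shows "heavy_config E h d c a a' b b'"
proof -
  have "{d, c, a, a', b, b'} = {c, d, a, a', b, b'}" by blast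
  with assms show ?thesis unfolding heavy_config_def by (simp only: simp_thms)
qed

lemma heavy_config_swap_ends:
  assumes "heavy_config E h c d a a' b b'"
  shows "heavy_config E h c d a' a b b'"
proof -
  have "{c, d, a', a, b, b'} = {c, d, a, a', b, b'}" "{a', a} = {a, a'}" by blast+
  with assms show ?thesis unfolding heavy_config_def by (simp only: simp_thms)
qed

lemma heavy_config_swap_pairs:
  assumes "heavy_config E h c d a a' b b'"
  shows "heavy_config E h c d b b' a a'"
proof -
  have "{c, d, b, b', a, a'} = {c, d, a, a', b, b'}" "{{b, b'}, {a, a'}} = {{a, a'}, {b, b'}}"
    by blast+
  with assms show ?thesis unfolding heavy_config_def by (simp only: simp_thms)
qed

lemma heavy_config_neighbours:
  "heavy_config E h c d a a' b b' \<Longrightarrow> neighbours E h = {c, d, a, a', b, b'}"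
  unfolding heavy_config_def by (elim conjE)

context class_6_5
begin

lemma heavy_config_exists:
  assumes "13 \<le> triangles_at E h"
  obtains c d a a' b b' where "heavy_config E h c d a a' b b'"
proof -
  let ?A = "neighbours E h"
  let ?M = "missing_edges E ?A"
  have deg6: "card ?A = 6"
    using card_neighbours_le_6[of h] triangles_at_le_10[of h] assms by fastforce
  then have "card ?M = 2" using triangles_at_deg_6 two_missing_edges assms by fastforce
  then obtain e1 e2 where M: "?M = {e1, e2}" "e1 \<noteq> e2" by (meson card_2_iff)
  have disjoint: "e1 \<inter> e2 = {}"
  proof (rule ccontr)
    assume "e1 \<inter> e2 \<noteq> {}"
    then obtain z where "\<forall>e \<in> ?M. z \<in> e" unfolding M(1) by blast
    then show False using missing_edges_not_covered deg6 by fastforce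
  qed
  have "e1 \<in> pairs ?A" "e2 \<in> pairs ?A" using M(1) unfolding missing_edges_def by blast+
  obtain a a' where a: "e1 = {a, a'}" "a \<noteq> a'" "a \<in> ?A" "a' \<in> ?A"
    using \<open>e1 \<in> pairs ?A\<close> by (rule pairsE)
  obtain b b' where b: "e2 = {b, b'}" "b \<noteq> b'" "b \<in> ?A" "b' \<in> ?A"
    using \<open>e2 \<in> pairs ?A\<close> by (rule pairsE)
  have ab: "a \<notin> {b, b'}" "a' \<notin> {b, b'}" using disjoint a(1) b(1) by blast+
  have sub: "{a, a', b, b'} \<subseteq> ?A" using a b by blast
  have "card {a, a', b, b'} = 4" using ab a(2) b(2) by simp
  then have "card (?A - {a, a', b, b'}) = 2"
    using card_Diff_subset[OF _ sub] deg6 by (simp add: finite_subset[OF sub])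
  then obtain c d where "?A - {a, a', b, b'} = {c, d}" by (meson card_2_iff)
  then have A: "?A = {c, d, a, a', b, b'}" using sub by auto
  then have "card {c, d, a, a', b, b'} = 6" using deg6 by simp
  moreover note A
  moreover have "missing_edges E {c, d, a, a', b, b'} = {{a, a'}, {b, b'}}"
    using M(1) unfolding A a(1) b(1) .
  ultimately have "heavy_config E h c d a a' b b'" unfolding heavy_config_def by blast
  then show ?thesis by (rule that)
qed

lemma heavy_config_distinct:
  assumes "heavy_config E h c d a a' b b'"
  shows "distinct [h, c, d, a, a', b, b']"
proof -
  have "card (set [c, d, a, a', b, b']) = length [c, d, a, a', b, b']"
    using assms unfolding heavy_config_def by (elim conjE) simp
  then have "distinct [c, d, a, a', b, b']" by (rule card_distinct)
  moreover have "h \<notin> {c, d, a, a', b, b'}"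
    using not_in_neighbours[OF simple, of h] heavy_config_neighbours[OF assms] by simp
  ultimately show ?thesis by (simp only: distinct.simps set_simps) simp
qed

lemma heavy_config_edge:
  assumes "heavy_config E h c d a a' b b'" "x \<in> neighbours E h" "y \<in> neighbours E h" "x \<noteq> y"
  shows "{x, y} \<in> E \<longleftrightarrow> {x, y} \<noteq> {a, a'} \<and> {x, y} \<noteq> {b, b'}"
proof -
  have "missing_edges E (neighbours E h) = {{a, a'}, {b, b'}}"
    using assms(1) unfolding heavy_config_def by (elim conjE) (simp only:)
  moreover have "{x, y} \<in> pairs (neighbours E h)" using assms(2-4) by (rule pair_in_pairs)
  ultimately have "{x, y} \<notin> E \<longleftrightarrow> {x, y} \<in> {{a, a'}, {b, b'}}"
    unfolding missing_edges_def by (metis (mono_tags, lifting) mem_Collect_eq)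
  then show ?thesis by (simp only: insert_iff empty_iff) argo
qed

lemma neighbours_centre:
  assumes cfg: "heavy_config E h c d a a' b b'"
  shows "neighbours E c = {h, d, a, a', b, b'}"
proof -
  note D = heavy_config_distinct[OF cfg]
  note N = heavy_config_neighbours[OF cfg]
  have "{c, x} \<in> E" if "x \<in> {d, a, a', b, b'}" for x
    using heavy_config_edge[OF cfg, of c x] that N D by (auto simp: doubleton_eq_iff)
  moreover have "h \<in> neighbours E c" using N neighbours_sym by auto
  ultimately have sub: "{h, d, a, a', b, b'} \<subseteq> neighbours E c" unfolding neighbours_def by auto
  moreover have "card {h, d, a, a', b, b'} = 6" using D by simp
  ultimately show ?thesis
    using card_seteq[OF finite_neighbours[OF simple] sub] card_neighbours_le_6[of c] by simp
qed

lemma triangles_at_centre: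
  assumes cfg: "heavy_config E h c d a a' b b'"
  shows "13 \<le> triangles_at E c"
proof -
  note D = heavy_config_distinct[OF cfg] and N = heavy_config_neighbours[OF cfg]
  note NC = neighbours_centre[OF cfg]
  have link: "neighbours E c - {h} \<subseteq> neighbours E h" using NC N by auto
  have "missing_edges E (neighbours E c) \<subseteq> {{a, a'}, {b, b'}}"
  proof
    fix e assume e: "e \<in> missing_edges E (neighbours E c)"
    then have "e \<in> pairs (neighbours E c)" "e \<notin> E" unfolding missing_edges_def by simp_all
    then obtain x y where xy: "e = {x, y}" "x \<noteq> y" "x \<in> neighbours E c" "y \<in> neighbours E c"
      by (elim pairsE)
    have "h \<notin> e"
    proof
      assume "h \<in> e"
      then obtain z where "e = {h, z}" "z \<in> neighbours E c - {h}" using xy by auto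
      then show False
        using \<open>e \<notin> E\<close> link unfolding neighbours_def by auto
    qed
    then have "x \<in> neighbours E h" "y \<in> neighbours E h"
      using xy link by auto
    then show "e \<in> {{a, a'}, {b, b'}}"
      using heavy_config_edge[OF cfg] xy \<open>e \<notin> E\<close> by (simp only: insert_iff empty_iff) blast
  qed
  moreover have "card {{a, a'}, {b, b'}} \<le> 2" by (simp add: card_insert_if)
  ultimately have "card (missing_edges E (neighbours E c)) \<le> 2"
    by (meson card_mono finite.emptyI finite.insertI le_trans)
  moreover have "card (neighbours E c) = 6" using NC D by simp
  ultimately show ?thesis using triangles_at_deg_6[of c] by simp
qed

text \<open>If a has degree 6, its sixth neighbour x lies outside N(h) \<union> {h}, so x is non-adjacent to
  h, c and d, which together with bb' gives four missing edges in N(a).\<close>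

lemma triangles_at_peripheral:
  assumes cfg: "heavy_config E h c d a a' b b'"
  shows "triangles_at E a \<le> 11"
proof (cases "card (neighbours E a) \<le> 5")
  case True
  then show ?thesis using triangles_at_le_10 by fastforce
next
  case False
  then have deg6: "card (neighbours E a) = 6" using card_neighbours_le_6[of a] by simp
  note D = heavy_config_distinct[OF cfg] and N = heavy_config_neighbours[OF cfg]
  note NC = neighbours_centre[OF cfg] and ND = neighbours_centre[OF heavy_config_swap_centres[OF cfg]]
  have "{a, x} \<in> E" if "x \<in> {c, d, b, b'}" for x
    using heavy_config_edge[OF cfg, of a x] that N D by (auto simp: doubleton_eq_iff)
  moreover have "h \<in> neighbours E a" using N neighbours_sym by auto
  ultimately have sub: "{h, c, d, b, b'} \<subseteq> neighbours E a" unfolding neighbours_def by auto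
  have "{a, a'} \<notin> E" using heavy_config_edge[OF cfg, of a a'] N D by simp
  then have "a' \<notin> neighbours E a" unfolding neighbours_def by simp
  have "card (neighbours E a - {h, c, d, b, b'}) = 1"
    using card_Diff_subset[OF _ sub] deg6 D by simp
  then obtain x where x: "neighbours E a - {h, c, d, b, b'} = {x}" by (rule card_1_singletonE)
  then have xa: "x \<in> neighbours E a" "x \<notin> {h, c, d, b, b'}" by auto
  then have "x \<notin> {a, a'}" using not_in_neighbours[OF simple, of a] \<open>a' \<notin> neighbours E a\<close> by auto
  then have "x \<notin> neighbours E h" "x \<notin> neighbours E c" "x \<notin> neighbours E d"
    using xa(2) N NC ND by auto
  then have "{x, h} \<notin> E" "{x, c} \<notin> E" "{x, d} \<notin> E"
    unfolding neighbours_def by (simp_all add: insert_commute)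
  moreover have "{b, b'} \<notin> E" using heavy_config_edge[OF cfg, of b b'] N D by simp
  ultimately have "{{b, b'}, {x, h}, {x, c}, {x, d}} \<subseteq> missing_edges E (neighbours E a)"
    using sub xa D unfolding missing_edges_def by (auto intro!: pair_in_pairs)
  moreover have "card {{b, b'}, {x, h}, {x, c}, {x, d}} = 4"
    using D xa(2) \<open>x \<notin> {a, a'}\<close> by (auto simp: doubleton_eq_iff)
  ultimately have "4 \<le> card (missing_edges E (neighbours E a))"
    by (metis card_mono finite_missing_edges finite_neighbours[OF simple])
  then show ?thesis using triangles_at_deg_6[OF deg6] by simp
qed

lemma triangles_at_peripherals:
  assumes cfg: "heavy_config E h c d a a' b b'"
  shows "triangles_at E a \<le> 11" "triangles_at E a' \<le> 11"
    "triangles_at E b \<le> 11" "triangles_at E b' \<le> 11"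
  using triangles_at_peripheral[OF cfg]
    triangles_at_peripheral[OF heavy_config_swap_ends[OF cfg]]
    triangles_at_peripheral[OF heavy_config_swap_pairs[OF cfg]]
    triangles_at_peripheral[OF heavy_config_swap_ends[OF heavy_config_swap_pairs[OF cfg]]]
  by simp_all

lemma peripheral_light_neighbours:
  assumes cfg: "heavy_config E h c d a a' b b'"
  shows "b \<in> neighbours E a" "b' \<in> neighbours E a"
  using heavy_config_edge[OF cfg, of a b] heavy_config_edge[OF cfg, of a b']
    heavy_config_distinct[OF cfg] heavy_config_neighbours[OF cfg]
  unfolding neighbours_def by (auto simp: doubleton_eq_iff)

abbreviation heavy :: "nat set" where "heavy \<equiv> {v \<in> V. 13 \<le> triangles_at E v}"
abbreviation light :: "nat set" where "light \<equiv> {v \<in> V. triangles_at E v \<le> 11}"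

lemma heavy_has_4_light_neighbours:
  assumes "13 \<le> triangles_at E h"
  shows "4 \<le> card {p \<in> light. p \<in> neighbours E h}"
proof -
  obtain c d a a' b b' where cfg: "heavy_config E h c d a a' b b'"
    using heavy_config_exists[OF assms] .
  have "{a, a', b, b'} \<subseteq> neighbours E h" using heavy_config_neighbours[OF cfg] by blast
  then have "{a, a', b, b'} \<subseteq> {p \<in> light. p \<in> neighbours E h}"
    using triangles_at_peripherals[OF cfg] neighbours_subset[OF simple, of h] by blast
  moreover have "finite {p \<in> light. p \<in> neighbours E h}"
    using simple unfolding simple_graph_def by simp
  moreover have "card {a, a', b, b'} = 4" using heavy_config_distinct[OF cfg] by simp
  ultimately show ?thesis using card_mono by metis
qed

lemma light_has_le_4_heavy_neighbours:
  assumes "triangles_at E p \<le> 11"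
  shows "card {h \<in> heavy. p \<in> neighbours E h} \<le> 4"
proof (cases "{h \<in> heavy. p \<in> neighbours E h} = {}")
  case False
  then obtain h where h: "13 \<le> triangles_at E h" "p \<in> neighbours E h" by auto
  obtain c d a a' b b' where cfg: "heavy_config E h c d a a' b b'"
    using heavy_config_exists[OF h(1)] .
  have "p \<noteq> c" "p \<noteq> d"
    using triangles_at_centre[OF cfg] triangles_at_centre[OF heavy_config_swap_centres[OF cfg]]
      assms by auto
  then have "p \<in> {a, a', b, b'}" using h(2) heavy_config_neighbours[OF cfg] by auto
  then obtain q q' r where cfg': "heavy_config E h c d p r q q'"
    using cfg heavy_config_swap_ends heavy_config_swap_pairs by blast
  have q: "q \<in> neighbours E p" "q' \<in> neighbours E p" "q \<noteq> q'"
    "triangles_at E q \<le> 11" "triangles_at E q' \<le> 11"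
    using peripheral_light_neighbours[OF cfg'] triangles_at_peripherals[OF cfg']
      heavy_config_distinct[OF cfg'] by simp_all
  have "{h \<in> heavy. p \<in> neighbours E h} \<subseteq> neighbours E p - {q, q'}"
    using q neighbours_sym by auto
  moreover have "card (neighbours E p - {q, q'}) \<le> 4"
    using q card_neighbours_le_6[of p] by (simp add: card_Diff_subset finite_neighbours[OF simple])
  ultimately show ?thesis
    by (meson card_mono finite_Diff finite_neighbours[OF simple] le_trans)
qed (simp only: card.empty)

lemma card_heavy_le_card_light: "card heavy \<le> card light"
proof -
  have finV: "finite V" using simple unfolding simple_graph_def by simp
  have "card heavy * 4 \<le> (\<Sum>h\<in>heavy. card {p \<in> light. p \<in> neighbours E h})"
    using sum_bounded_below[of heavy "4::nat"] heavy_has_4_light_neighbours by simp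
  also have "\<dots> = (\<Sum>p\<in>light. card {h \<in> heavy. p \<in> neighbours E h})"
    by (rule double_counting) (simp_all add: finV)
  also have "\<dots> \<le> card light * 4"
    using sum_bounded_above[of light _ "4::nat"] light_has_le_4_heavy_neighbours by simp
  finally show ?thesis by simp
qed

lemma sum_triangles_at_le: "(\<Sum>v\<in>V. triangles_at E v) \<le> 12 * card V"
proof -
  have finV: "finite V" using simple unfolding simple_graph_def by simp
  have "(\<Sum>v\<in>V. triangles_at E v + (if triangles_at E v \<le> 11 then 1 else 0))
          \<le> (\<Sum>v\<in>V. 12 + (if 13 \<le> triangles_at E v then 1 else 0))"
    using triangles_at_le_13 by (intro sum_mono) (simp add: not_le)
  then have "(\<Sum>v\<in>V. triangles_at E v) + card light \<le> 12 * card V + card heavy"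
    by (simp add: sum.distrib card_filter_eq_sum[OF finV])
  then show ?thesis using card_heavy_le_card_light by linarith
qed

lemma rho_3_le_4:
  assumes "card V \<ge> 1"
  shows "rho 3 V E \<le> 4"
proof -
  have "3 * k_cliques 3 V E \<le> 12 * card V"
    using sum_triangles_at_le sum_triangles_at[OF simple] by simp
  then show ?thesis using assms unfolding rho_def by (simp add: divide_le_eq)
qed

end

subsection \<open>The extremal graph T(8,4)\<close>

lemma T84_edge: "{x, y} \<in> T84_E \<longleftrightarrow> x < 8 \<and> y < 8 \<and> x div 2 \<noteq> y div 2"
  unfolding T84_E_def T84_V_def by (auto simp: doubleton_eq_iff)

lemma simple_graph_T84: "simple_graph T84_V T84_E"
  unfolding simple_graph_def
proof
  show "finite T84_V" unfolding T84_V_def by simp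
  show "\<forall>e\<in>T84_E. e \<subseteq> T84_V \<and> card e = 2"
    unfolding T84_E_def by (auto simp: card_insert_if)
qed

lemma k_cliques_3_T84: "k_cliques 3 T84_V T84_E = 32"
proof -
  have "{S. is_clique T84_V T84_E S \<and> card S = 3}
      = Set.filter (\<lambda>S. card S = 3 \<and> (\<forall>x\<in>S. \<forall>y\<in>S. x \<noteq> y \<longrightarrow> x div 2 \<noteq> y div 2))
          (Pow (set [0..<8]))"
    unfolding is_clique_def by (auto simp: T84_edge T84_V_def)
  moreover have "card (Set.filter (\<lambda>S. card S = 3 \<and> (\<forall>x\<in>S. \<forall>y\<in>S. x \<noteq> y \<longrightarrow> x div 2 \<noteq> y div 2))
          (Pow (set [0..<8]))) = 32"
    by code_simp
  ultimately show ?thesis unfolding k_cliques_def by simp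
qed

lemma rho_3_T84: "rho 3 T84_V T84_E = 4"
proof -
  have "card T84_V = 8" unfolding T84_V_def by simp
  then show ?thesis unfolding rho_def k_cliques_3_T84 by simp
qed

lemma T84_in_class: "in_class 6 5 T84_V T84_E"
  unfolding in_class_def
proof (intro conjI ballI allI impI)
  show "simple_graph T84_V T84_E" by (rule simple_graph_T84)
  fix v assume "v \<in> T84_V"
  then have "neighbours T84_E v = Set.filter (\<lambda>u. v div 2 \<noteq> u div 2) (set [0..<8])"
    unfolding neighbours_def T84_V_def by (auto simp: T84_edge)
  moreover have "\<forall>v\<in>set [0..<8]. card (Set.filter (\<lambda>u. v div 2 \<noteq> u div 2) (set [0..<8])) \<le> 6"
    by code_simp
  ultimately show "degree T84_E v \<le> 6"
    using \<open>v \<in> T84_V\<close> degree_eq_card_neighbours[OF simple_graph_T84] unfolding T84_V_def by simp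
next
  fix S assume S: "is_clique T84_V T84_E S"
  have "inj_on (\<lambda>x. x div 2) S"
  proof (rule inj_onI)
    fix x y assume "x \<in> S" "y \<in> S" "x div 2 = y div 2"
    then show "x = y" using S unfolding is_clique_def by (auto simp: T84_edge)
  qed
  moreover have "card ((\<lambda>x. x div 2) ` S) \<le> 4"
  proof -
    have "(\<lambda>x. x div 2) ` S \<subseteq> {0..<4}" using S unfolding is_clique_def T84_V_def by auto
    then show ?thesis using card_mono[of "{0..<4::nat}"] by fastforce
  qed
  ultimately show "card S \<le> 5" using card_image by fastforce
qed

theorem mainTheorem20:
  shows "f_sup 3 6 5 = 4 \<and> rho 3 T84_V T84_E = 4"
proof
  let ?R = "{rho 3 V E | V E. in_class 6 5 V E \<and> card V \<ge> 1}"
  have "4 \<in> ?R"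
    using T84_in_class rho_3_T84 by (force simp: T84_V_def)
  moreover have "\<forall>x\<in>?R. x \<le> 4"
    using class_6_5.rho_3_le_4 class_6_5.intro by blast
  ultimately show "f_sup 3 6 5 = 4" unfolding f_sup_def by (intro cSup_eq_maximum) auto
  show "rho 3 T84_V T84_E = 4" by (rule rho_3_T84)
qed

end
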